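(* Let $q$ be odd and let $U$ be an intersecting family of polynomials over $\mathbb{F}_q$ of degree at most $2$ with $|U|>\frac{q^2+2q-1}{2}$. Suppose $H\subseteq U$ has more than $\frac{q^2+q}{2}$ elements and there exist $\alpha,\beta\in\mathbb{F}_q$ with $h(\alpha)=\beta$ for all $h\in H$. Then $f(\alpha)=\beta$ for every $f\in U$.
   Context: A set of polynomials over $\mathbb{F}_q$ is intersecting if for any two members $f_1,f_2$ the graphs $\{(x,f_i(x)):x\in\mathbb{F}_q\}$ share at least one point. *)

theory Defs
  imports "HOL-Computational_Algebra.Polynomial" "HOL-Library.Cardinality"
begin

definition intersecting :: "'a::field poly set \<Rightarrow> bool" where
  "intersecting U \<longleftrightarrow> (\<forall>f1\<in>U. \<forall>f2\<in>U. \<exists>x. poly f1 x = poly f2 x)"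

end

theory Submission
  imports Defs
begin

text \<open>Suppose some \<open>f \<in> U\<close> misses the point \<open>(\<alpha>, \<beta>)\<close>. The differences \<open>g = h - f\<close>,
\<open>h \<in> H\<close>, have degree at most 2, all take the same nonzero value \<open>\<beta> - f(\<alpha>)\<close> at \<open>\<alpha>\<close>, and each
has a root because \<open>U\<close> is intersecting. Such a \<open>g\<close> vanishing at a given \<open>r \<noteq> \<alpha>\<close> is determined by its
\<open>x\<^sup>2\<close>-coefficient, so there are at most \<open>q(q - 1)\<close> pairs \<open>(g, r)\<close> with \<open>g(r) = 0\<close>. A \<open>g\<close> with
exactly one root \<open>r\<close> is either linear or a multiple of \<open>(x - r)\<^sup>2\<close>, hence determined by \<open>r\<close> and
that alternative; so at most \<open>2(q - 1)\<close> of them exist and all others have two roots. This gives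
\<open>2|H| \<le> q(q - 1) + 2(q - 1) < q\<^sup>2 + q\<close>, a contradiction.\<close>

lemma finite_degree_le:
  "finite {p :: 'a::{finite,zero} poly. degree p \<le> n}"
proof (rule finite_imageD)
  have "(\<lambda>p. map (coeff p) [0..<Suc n]) ` {p. degree p \<le> n} \<subseteq> {xs. set xs \<subseteq> UNIV \<and> length xs = Suc n}"
    by auto
  then show "finite ((\<lambda>p. map (coeff p) [0..<Suc n]) ` {p :: 'a poly. degree p \<le> n})"
    by (rule finite_subset) (rule finite_lists_length_eq, simp)
  show "inj_on (\<lambda>p. map (coeff p) [0..<Suc n]) {p :: 'a poly. degree p \<le> n}"
  proof (rule inj_onI, rule poly_eqI)
    fix p q :: "'a poly" and i
    assume deg: "p \<in> {p. degree p \<le> n}" "q \<in> {p. degree p \<le> n}"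
      and eq: "map (coeff p) [0..<Suc n] = map (coeff q) [0..<Suc n]"
    show "coeff p i = coeff q i"
    proof (cases "i \<le> n")
      case True
      then show ?thesis using arg_cong[OF eq, of "\<lambda>xs. xs ! i"] by (simp del: upt_Suc)
    next
      case False
      then show ?thesis using deg by (simp add: coeff_eq_0)
    qed
  qed
qed

lemma quadratic_unique_root_square:
  fixes p :: "'a::field poly"
  assumes "degree p = 2" and roots: "{x. poly p x = 0} = {r}"
  shows "p = smult (lead_coeff p) ([:- r, 1:] ^ 2)"
proof -
  obtain c b a where p: "p = [:c, b, a:]" and "a \<noteq> 0"
    using degree2_coeffs[OF assms(1)] .
  have "poly p r = 0" using roots by auto
  then have c: "c = - (b * r + a * r^2)"
    by (simp add: p eq_neg_iff_add_eq_0 algebra_simps power2_eq_square)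
  \<comment> \<open>the root of the cofactor of \<open>[:- r, 1:]\<close> in \<open>p\<close>\<close>
  have "poly p (- (a * r + b) / a) = 0"
    using \<open>a \<noteq> 0\<close> by (simp add: p c field_simps power2_eq_square)
  then have "- (a * r + b) / a = r" using roots by auto
  then have b: "b = - 2 * a * r"
    using \<open>a \<noteq> 0\<close> by (simp add: field_simps) (metis minus_equation_iff)
  show ?thesis
    by (simp add: p c b power2_eq_square algebra_simps)
qed

lemma card_Compl_singleton: "card (- {x :: 'a :: finite}) = CARD('a) - 1"
  by (simp add: Compl_eq_Diff_UNIV card_Diff_singleton)

locale quadratics_with_common_nonzero_value =
  fixes G :: "'a::{finite,field} poly set" and \<alpha> c :: 'a
  assumes degree_le_2: "g \<in> G \<Longrightarrow> degree g \<le> 2"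
    and poly_at: "g \<in> G \<Longrightarrow> poly g \<alpha> = c"
    and value_nonzero: "c \<noteq> 0"
begin

lemma finite: "finite G"
  using finite_degree_le by (rule finite_subset[rotated]) (auto dest: degree_le_2)

lemma root_neq_point: "g \<in> G \<Longrightarrow> poly g r = 0 \<Longrightarrow> r \<noteq> \<alpha>"
  using poly_at value_nonzero by auto

lemma eq_if_common_root_and_coeff_2:
  assumes "g1 \<in> G" "g2 \<in> G" "poly g1 r = 0" "poly g2 r = 0" "coeff g1 2 = coeff g2 2"
  shows "g1 = g2"
proof -
  have "r \<noteq> \<alpha>" using root_neq_point assms(1,3) .
  then show ?thesis
    by (intro poly_eqI_degree_lead_coeff[where A = "{\<alpha>, r}"])
      (use assms poly_at degree_le_2 in auto)
qed

lemma eq_if_same_unique_root: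
  assumes "g1 \<in> G" "g2 \<in> G" "coeff g1 2 \<noteq> 0" "coeff g2 2 \<noteq> 0"
    and "{x. poly g1 x = 0} = {r}" "{x. poly g2 x = 0} = {r}"
  shows "g1 = g2"
proof -
  have "degree g1 = 2" "degree g2 = 2"
    using assms(1-4) degree_le_2 by (auto intro: antisym le_degree)
  then have g: "g1 = smult (coeff g1 2) ([:- r, 1:] ^ 2)" "g2 = smult (coeff g2 2) ([:- r, 1:] ^ 2)"
    using quadratic_unique_root_square assms(5,6) by metis+
  have "r \<noteq> \<alpha>" using root_neq_point assms(1,5) by auto
  have "poly (smult a ([:- r, 1:] ^ 2)) \<alpha> = a * (\<alpha> - r)^2" for a
    by simp
  then have "coeff g1 2 * (\<alpha> - r)^2 = coeff g2 2 * (\<alpha> - r)^2"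
    using poly_at[OF assms(1)] poly_at[OF assms(2)] g by metis
  then have "coeff g1 2 = coeff g2 2" using \<open>r \<noteq> \<alpha>\<close> by simp
  then show ?thesis using g by simp
qed

lemma card_vanishing_at_le: "card {g \<in> G. poly g r = 0} \<le> CARD('a)"
proof -
  have "inj_on (\<lambda>g. coeff g 2) {g \<in> G. poly g r = 0}"
    by (rule inj_onI) (auto intro: eq_if_common_root_and_coeff_2)
  then show ?thesis by (rule card_inj_on_le) auto
qed

lemma sum_card_roots_le: "(\<Sum>g\<in>G. card {x. poly g x = 0}) \<le> (CARD('a) - 1) * CARD('a)"
proof -
  have "(\<Sum>g\<in>G. card {x. poly g x = 0}) = (\<Sum>g\<in>G. card {x \<in> - {\<alpha>}. poly g x = 0})"
    by (intro sum.cong refl arg_cong[where f = card]) (auto dest: root_neq_point)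
  also have "\<dots> = (\<Sum>x \<in> - {\<alpha>}. card {g \<in> G. poly g x = 0})"
    by (rule sum_multicount_gen) (auto simp: finite)
  also have "\<dots> \<le> (\<Sum>x \<in> - {\<alpha>}. CARD('a))"
    by (rule sum_mono) (rule card_vanishing_at_le)
  also have "\<dots> = (CARD('a) - 1) * CARD('a)"
    by (simp add: card_Compl_singleton)
  finally show ?thesis .
qed

lemma card_unique_root_le: "card {g \<in> G. \<exists>r. {x. poly g x = 0} = {r}} \<le> 2 * (CARD('a) - 1)"
proof -
  let ?S = "{g \<in> G. \<exists>r. {x. poly g x = 0} = {r}}"
  let ?\<phi> = "\<lambda>g. (the_elem {x. poly g x = 0}, coeff g 2 = 0)"
  have "inj_on ?\<phi> ?S"
  proof (rule inj_onI)
    fix g1 g2 assume g1: "g1 \<in> ?S" and g2: "g2 \<in> ?S" and eq: "?\<phi> g1 = ?\<phi> g2"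
    then obtain r where r: "{x. poly g1 x = 0} = {r}" "{x. poly g2 x = 0} = {r}"
      by auto
    show "g1 = g2"
    proof (cases "coeff g1 2 = 0")
      case True
      then show ?thesis using g1 g2 eq r by (auto intro: eq_if_common_root_and_coeff_2)
    next
      case False
      then show ?thesis using g1 g2 eq r by (auto intro: eq_if_same_unique_root)
    qed
  qed
  moreover have "?\<phi> ` ?S \<subseteq> (- {\<alpha>}) \<times> UNIV"
    using root_neq_point by fastforce
  ultimately have "card ?S \<le> card ((- {\<alpha>}) \<times> (UNIV :: bool set))"
    by (rule card_inj_on_le) simp
  then show ?thesis by (simp add: card_cartesian_product card_Compl_singleton)
qed

lemma card_bound_if_all_have_roots:
  assumes "\<forall>g\<in>G. \<exists>r. poly g r = 0"
  shows "2 * card G \<le> (CARD('a) - 1) * (CARD('a) + 2)"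
proof -
  let ?S = "{g \<in> G. \<exists>r. {x. poly g x = 0} = {r}}"
  have "2 * card G = (\<Sum>g\<in>G. 2)" by simp
  also have "\<dots> \<le> (\<Sum>g\<in>G. card {x. poly g x = 0} + (if g \<in> ?S then 1 else 0))"
  proof (rule sum_mono)
    fix g assume "g \<in> G"
    then have "g \<noteq> 0" using poly_at[of g] value_nonzero by auto
    have roots: "card {x. poly g x = 0} \<noteq> 0"
      using assms \<open>g \<in> G\<close> poly_roots_finite[OF \<open>g \<noteq> 0\<close>] by auto
    have single: "g \<in> ?S \<longleftrightarrow> card {x. poly g x = 0} = 1"
      using \<open>g \<in> G\<close> by (simp add: card_1_singleton_iff)
    show "2 \<le> card {x. poly g x = 0} + (if g \<in> ?S then 1 else 0)"
      unfolding single using roots by presburger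
  qed
  also have "\<dots> = (\<Sum>g\<in>G. card {x. poly g x = 0}) + card ?S"
    by (simp add: sum.distrib sum.If_cases finite Int_def)
  also have "\<dots> \<le> (CARD('a) - 1) * CARD('a) + 2 * (CARD('a) - 1)"
    using sum_card_roots_le card_unique_root_le by (rule add_mono)
  also have "\<dots> = (CARD('a) - 1) * (CARD('a) + 2)"
    by (simp add: distrib_left)
  finally show ?thesis .
qed

end

theorem lemma7:
  fixes U H :: "'a::{finite,field} poly set" and \<alpha> \<beta> :: 'a
  assumes "odd CARD('a)"
    and "intersecting U"
    and "\<forall>f\<in>U. degree f \<le> 2"
    and "real (card U) > (real (CARD('a))^2 + 2 * real (CARD('a)) - 1) / 2"
    and "H \<subseteq> U"
    and "real (card H) > (real (CARD('a))^2 + real (CARD('a))) / 2"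
    and "\<forall>h\<in>H. poly h \<alpha> = \<beta>"
  shows "\<forall>f\<in>U. poly f \<alpha> = \<beta>"
proof (rule ccontr)
  assume "\<not> ?thesis"
  then obtain f where "f \<in> U" and f_misses: "poly f \<alpha> \<noteq> \<beta>" by blast
  define G where "G = (\<lambda>h. h - f) ` H"
  interpret quadratics_with_common_nonzero_value G \<alpha> "\<beta> - poly f \<alpha>"
  proof
    fix g assume "g \<in> G"
    then obtain h where "h \<in> H" and g: "g = h - f" by (auto simp: G_def)
    then show "degree g \<le> 2"
      using assms(3,5) \<open>f \<in> U\<close> by (auto intro: degree_diff_le)
    show "poly g \<alpha> = \<beta> - poly f \<alpha>"
      using assms(7) \<open>h \<in> H\<close> g by simp
  qed (use f_misses in simp)
  have "\<forall>g\<in>G. \<exists>r. poly g r = 0"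
    using assms(2,5) \<open>f \<in> U\<close> by (fastforce simp: G_def intersecting_def)
  then have "2 * card G \<le> (CARD('a) - 1) * (CARD('a) + 2)"
    by (rule card_bound_if_all_have_roots)
  moreover have "card G = card H"
    unfolding G_def by (rule card_image) (rule inj_onI, simp)
  ultimately have "2 * card H \<le> (CARD('a) - 1) * (CARD('a) + 2)"
    by simp
  moreover have "real ((CARD('a) - 1) * (CARD('a) + 2)) = (real CARD('a) - 1) * (real CARD('a) + 2)"
    by (subst of_nat_mult, subst of_nat_diff) (simp_all add: Suc_leI)
  ultimately have "2 * real (card H) \<le> (real CARD('a) - 1) * (real CARD('a) + 2)"
    by (metis of_nat_le_iff of_nat_mult of_nat_numeral)
  then show False
    using assms(6) by (simp add: power2_eq_square algebra_simps)
qed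

end
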